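(* Consider the setting of the world-model-learning problem: $p_1,\dots,p_d\in(0,1)$ with $\sum_kp_k=1$; tasks $h_i=h_i'\circ\psi^{-1}$ sampled independently by drawing $k$ with $\Pr[k=i]=p_i$ and then $h_i'$ uniformly from $\mathcal{F}^d_k$; representations $\Phi$ range over maps $\{-1,1\}^m\to\mathcal{Z}$ with $\Phi\circ\psi$ a bijection of $\mathcal{Z}$, and $g_i$ is the unique function with $g_i\circ\Phi\in\mathcal{H}(h_i)$. Now measure degrees in a new basis: let $U_d$ be a compatible basis transform of $\mathbb{R}^{\{-1,1\}^d}$ and $U_m$ a compatible basis transform of $\mathbb{R}^{\{-1,1\}^m}$, and replace the objective by $\frac1n\big(\sum_{i=1}^n\deg_{U_d}(g_i)+\sum_{j=1}^d\deg_{U_m}(\Phi_j)\big)$. Then, almost surely, as $n\to\infty$ this objective converges for every admissible $\Phi$, and every $\Phi^*$ minimizing the limit learns the world model up to negations and permutations: there exist a permutation $i_1,\dots,i_d$ of $[d]$ and signs $s_j\in\{-1,1\}$ with $\Phi^*_j(\psi(z))=s_jz_{i_j}$ for all $j\in[d]$, $z\in\mathcal{Z}$.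
   Context: Standing setup: $m\ge d\ge1$, $\mathcal{Z}=\{-1,1\}^d$, $\psi:\mathcal{Z}\to\{-1,1\}^m$ injective, $\mathcal{X}=\psi(\mathcal{Z})$. For $f:\{-1,1\}^n\to\mathbb{R}$, $f=\sum_{S\subseteq[n]}\hat f(S)\chi_S$, $\chi_S(x)=\prod_{i\in S}x_i$, $\deg(f)=\max\{|S|:\hat f(S)\ne 0\}$. $\mathcal{H}(h)$: functions on $\{-1,1\}^m$ agreeing with task $h$ on $\mathcal{X}$. Finite-precision convention: fix finite $V\subset\mathbb{R}$ with $\{-1,1\}\subseteq V$; $\mathcal{F}^d$ = all functions $\{-1,1\}^d\to V$, $\mathcal{F}^d_k=\{h\in\mathcal{F}^d:\deg h\le k\}$. $\mathbb{R}^{\{-1,1\}^n}$ denotes the real vector space of all functions $\{-1,1\}^n\to\mathbb{R}$. A basis transform is an invertible linear map $U$ on $\mathbb{R}^{\{-1,1\}^n}$ (so $\{U(\chi_S)\}_{S\subseteq[n]}$ is a basis); the degree of $f$ under $U$ is $\deg_U(f):=\max\{\deg(U^{-1}(\chi_S)):\hat f(S)\ne0\}$. $U$ is compatible if $\deg(U(\chi_S))=\deg(\chi_S)=|S|$ for every $S\subseteq[n]$. *)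

theory Defs
  imports "HOL-Probability.Probability"
begin

definition cube :: "nat \<Rightarrow> (nat \<Rightarrow> real) set" where
  "cube n = {x. (\<forall>i<n. x i \<in> {-1, 1}) \<and> (\<forall>i\<ge>n. x i = 0)}"

text \<open>The vector space R^{{-1,1}^n}, realised as functions vanishing off the cube.\<close>
definition fspace :: "nat \<Rightarrow> ((nat \<Rightarrow> real) \<Rightarrow> real) set" where
  "fspace n = {f. \<forall>x. x \<notin> cube n \<longrightarrow> f x = 0}"

definition chi :: "nat \<Rightarrow> nat set \<Rightarrow> (nat \<Rightarrow> real) \<Rightarrow> real" where
  "chi n S x = (if x \<in> cube n then (\<Prod>i\<in>S. x i) else 0)"

definition fourier :: "nat \<Rightarrow> ((nat \<Rightarrow> real) \<Rightarrow> real) \<Rightarrow> nat set \<Rightarrow> real" where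
  "fourier n f S = (\<Sum>x\<in>cube n. f x * (\<Prod>i\<in>S. x i)) / 2 ^ n"

text \<open>Degree; the zero function gets degree 0 (convention).\<close>
definition deg :: "nat \<Rightarrow> ((nat \<Rightarrow> real) \<Rightarrow> real) \<Rightarrow> nat" where
  "deg n f = Max (insert 0 {card S | S. S \<subseteq> {..<n} \<and> fourier n f S \<noteq> 0})"

definition basis_transform :: "nat \<Rightarrow> (((nat \<Rightarrow> real) \<Rightarrow> real) \<Rightarrow> ((nat \<Rightarrow> real) \<Rightarrow> real)) \<Rightarrow> bool" where
  "basis_transform n U \<longleftrightarrow>
     (\<forall>f\<in>fspace n. \<forall>g\<in>fspace n. U (\<lambda>x. f x + g x) = (\<lambda>x. U f x + U g x)) \<and>
     (\<forall>c. \<forall>f\<in>fspace n. U (\<lambda>x. c * f x) = (\<lambda>x. c * U f x)) \<and>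
     bij_betw U (fspace n) (fspace n)"

definition compatible :: "nat \<Rightarrow> (((nat \<Rightarrow> real) \<Rightarrow> real) \<Rightarrow> ((nat \<Rightarrow> real) \<Rightarrow> real)) \<Rightarrow> bool" where
  "compatible n U \<longleftrightarrow> (\<forall>S. S \<subseteq> {..<n} \<longrightarrow> deg n (U (chi n S)) = card S)"

definition deg_U :: "nat \<Rightarrow> (((nat \<Rightarrow> real) \<Rightarrow> real) \<Rightarrow> ((nat \<Rightarrow> real) \<Rightarrow> real))
                      \<Rightarrow> ((nat \<Rightarrow> real) \<Rightarrow> real) \<Rightarrow> nat" where
  "deg_U n U f = Max (insert 0 {deg n (inv_into (fspace n) U (chi n S)) | S.
                                 S \<subseteq> {..<n} \<and> fourier n f S \<noteq> 0})"

definition Fk :: "real set \<Rightarrow> nat \<Rightarrow> nat \<Rightarrow> ((nat \<Rightarrow> real) \<Rightarrow> real) set" where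
  "Fk V d k = {h \<in> fspace d. (\<forall>x\<in>cube d. h x \<in> V) \<and> deg d h \<le> k}"

definition task_pmf :: "real set \<Rightarrow> nat \<Rightarrow> nat pmf \<Rightarrow> ((nat \<Rightarrow> real) \<Rightarrow> real) pmf" where
  "task_pmf V d K = bind_pmf K (\<lambda>k. pmf_of_set (Fk V d k))"

definition admissible :: "nat \<Rightarrow> nat \<Rightarrow> ((nat \<Rightarrow> real) \<Rightarrow> (nat \<Rightarrow> real))
                           \<Rightarrow> ((nat \<Rightarrow> real) \<Rightarrow> (nat \<Rightarrow> real)) \<Rightarrow> bool" where
  "admissible d m \<psi> \<Phi> \<longleftrightarrow> \<Phi> ` cube m \<subseteq> cube d \<and> bij_betw (\<Phi> \<circ> \<psi>) (cube d) (cube d)"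

text \<open>g: the unique function on {-1,1}^d with g o Phi agreeing with h = h' o psi^{-1} on X.\<close>
definition g_of :: "nat \<Rightarrow> ((nat \<Rightarrow> real) \<Rightarrow> (nat \<Rightarrow> real)) \<Rightarrow> ((nat \<Rightarrow> real) \<Rightarrow> (nat \<Rightarrow> real))
                    \<Rightarrow> ((nat \<Rightarrow> real) \<Rightarrow> real) \<Rightarrow> ((nat \<Rightarrow> real) \<Rightarrow> real)" where
  "g_of d \<psi> \<Phi> h' = (THE g. g \<in> fspace d \<and> (\<forall>z\<in>cube d. g (\<Phi> (\<psi> z)) = h' z))"

definition coord :: "nat \<Rightarrow> ((nat \<Rightarrow> real) \<Rightarrow> (nat \<Rightarrow> real)) \<Rightarrow> nat \<Rightarrow> (nat \<Rightarrow> real) \<Rightarrow> real" where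
  "coord m \<Phi> j x = (if x \<in> cube m then \<Phi> x j else 0)"

definition objective :: "nat \<Rightarrow> nat \<Rightarrow> ((nat \<Rightarrow> real) \<Rightarrow> (nat \<Rightarrow> real))
     \<Rightarrow> (((nat \<Rightarrow> real) \<Rightarrow> real) \<Rightarrow> ((nat \<Rightarrow> real) \<Rightarrow> real))
     \<Rightarrow> (((nat \<Rightarrow> real) \<Rightarrow> real) \<Rightarrow> ((nat \<Rightarrow> real) \<Rightarrow> real))
     \<Rightarrow> (nat \<Rightarrow> ((nat \<Rightarrow> real) \<Rightarrow> real)) \<Rightarrow> ((nat \<Rightarrow> real) \<Rightarrow> (nat \<Rightarrow> real)) \<Rightarrow> nat \<Rightarrow> real" where
  "objective d m \<psi> Ud Um hs \<Phi> n =
     (1 / real n) * ((\<Sum>i<n. real (deg_U d Ud (g_of d \<psi> \<Phi> (hs i))))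
                    + (\<Sum>j<d. real (deg_U m Um (coord m \<Phi> j))))"

end

theory Submission
  imports Defs "HOL-Library.Function_Algebras"
begin

text \<open>A compatible basis transform maps the space of functions of degree at most \<open>k\<close> onto
  itself (it maps the characters of degree at most \<open>k\<close> into it injectively, and dimensions
  agree), so the transformed degree is the ordinary degree. For an admissible \<open>\<Phi>\<close> the task
  term of the objective is then the average of the i.i.d. bounded variables
  \<open>deg (h\<^sub>i \<circ> \<tau>)\<close>, where \<open>\<tau>\<close> is the inverse of the bijection \<open>\<Phi> \<circ> \<psi>\<close> of the cube,
  while the representation term is constant in \<open>n\<close>. By the strong law of large numbers,
  simultaneously for the finitely many \<open>\<tau>\<close>, the objective tends to \<open>E[deg (h \<circ> \<tau>)]\<close>.

  Relabelling by \<open>\<tau>\<close> maps \<open>F\<^sub>k\<close> injectively into the \<open>V\<close>-valued functions, and every function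
  pushed out of \<open>F\<^sub>k\<close> has degree above \<open>k\<close>; so the total degree over \<open>F\<^sub>k\<close> never decreases. A
  minimizer does at least as well as the world model (\<open>\<tau> = id\<close>), hence it keeps \<open>F\<^sub>1\<close> inside
  \<open>F\<^sub>1\<close>. A \<open>\<plusminus>1\<close>-valued function of degree one is a signed coordinate, so each coordinate of
  \<open>\<tau>\<close>, and therefore of \<open>\<Phi> \<circ> \<psi>\<close>, is a signed coordinate, and these coordinates form a
  permutation.\<close>

section \<open>Fourier analysis on the cube\<close>

lemma cube_eq_image_PiE:
  "cube n = (\<lambda>g i. if i < n then g i else 0) ` (PiE {..<n} (\<lambda>_. {-1, 1}))"
proof (intro equalityI subsetI)
  fix x assume x: "x \<in> cube n"
  then have "x = (\<lambda>i. if i < n then restrict x {..<n} i else 0)"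
    and "restrict x {..<n} \<in> PiE {..<n} (\<lambda>_. {-1, 1})"
    by (auto simp: cube_def fun_eq_iff)
  then show "x \<in> (\<lambda>g i. if i < n then g i else 0) ` (PiE {..<n} (\<lambda>_. {-1, 1}))"
    by blast
next
  fix x assume "x \<in> (\<lambda>g i. if i < n then g i else 0) ` (PiE {..<n} (\<lambda>_. {-1, 1::real}))"
  then obtain g where g: "g \<in> PiE {..<n} (\<lambda>_. {-1, 1::real})" and x: "x = (\<lambda>i. if i < n then g i else 0)"
    by blast
  show "x \<in> cube n"
    unfolding cube_def x using PiE_mem[OF g] by auto
qed

lemma finite_cube [simp]: "finite (cube n)"
  unfolding cube_eq_image_PiE by (auto intro!: finite_PiE)

lemma card_cube: "card (cube n) = 2 ^ n"
proof -
  let ?pad = "\<lambda>g i. if i < n then g i else (0::real)" and ?P = "PiE {..<n} (\<lambda>_. {-1, 1::real})"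
  have "inj_on ?pad ?P"
  proof (rule inj_onI)
    fix g g' assume g: "g \<in> ?P" and g': "g' \<in> ?P" and eq: "?pad g = ?pad g'"
    show "g = g'"
    proof (rule PiE_ext[OF g g'])
      fix i assume "i \<in> {..<n}"
      then show "g i = g' i" using fun_cong[OF eq, of i] by simp
    qed
  qed
  then have "card (cube n) = card ?P"
    unfolding cube_eq_image_PiE by (rule card_image)
  then show ?thesis by (simp add: card_PiE numeral_2_eq_2)
qed

lemma cube_nonempty [simp]: "cube n \<noteq> {}"
  using card_cube[of n] by auto

lemma cube_flip: "x \<in> cube n \<Longrightarrow> x(j := - x j) \<in> cube n"
  by (auto simp: cube_def)

lemma cube_coord_square: "x \<in> cube n \<Longrightarrow> i < n \<Longrightarrow> x i * x i = 1"
  by (auto simp: cube_def)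

lemma sum_cube_monomial:
  assumes S: "S \<subseteq> {..<n}" "S \<noteq> {}"
  shows "(\<Sum>x\<in>cube n. \<Prod>i\<in>S. x i) = (0::real)"
proof -
  obtain a where a: "a \<in> S" using S by blast
  have fin: "finite S" using S finite_subset by blast
  define flip where "flip x = x(a := - x a)" for x :: "nat \<Rightarrow> real"
  have neg: "(\<Prod>i\<in>S. flip x i) = - (\<Prod>i\<in>S. x i)" for x
  proof -
    have "(\<Prod>i\<in>S - {a}. flip x i) = (\<Prod>i\<in>S - {a}. x i)"
      by (rule prod.cong) (auto simp: flip_def)
    then show ?thesis
      using prod.remove[OF fin a, of "flip x"] prod.remove[OF fin a, of x] by (simp add: flip_def)
  qed
  \<comment> \<open>\<open>flip\<close> is an involution of the cube negating the monomial\<close>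
  have "(\<Sum>x\<in>cube n. \<Prod>i\<in>S. x i) = (\<Sum>x\<in>cube n. \<Prod>i\<in>S. flip x i)"
    by (rule sum.reindex_bij_witness[where i = flip and j = flip]) (auto simp: flip_def cube_flip)
  also have "\<dots> = - (\<Sum>x\<in>cube n. \<Prod>i\<in>S. x i)"
    by (simp add: neg sum_negf)
  finally show ?thesis by simp
qed

lemma monomial_mult_monomial:
  assumes x: "x \<in> cube n" and S: "S \<subseteq> {..<n}" and T: "T \<subseteq> {..<n}"
  shows "(\<Prod>i\<in>S. x i) * (\<Prod>i\<in>T. x i) = (\<Prod>i\<in>(S - T) \<union> (T - S). x i)"
proof -
  have fin: "finite S" "finite T" using S T finite_subset by blast+
  have S_split: "(\<Prod>i\<in>S. x i) = (\<Prod>i\<in>S - T. x i) * (\<Prod>i\<in>S \<inter> T. x i)"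
    using prod.subset_diff[of "S \<inter> T" S x] fin by (simp add: Diff_Int)
  have T_split: "(\<Prod>i\<in>T. x i) = (\<Prod>i\<in>T - S. x i) * (\<Prod>i\<in>S \<inter> T. x i)"
    using prod.subset_diff[of "S \<inter> T" T x] fin by (simp add: Diff_Int Int_commute)
  have "(\<Prod>i\<in>S \<inter> T. x i) * (\<Prod>i\<in>S \<inter> T. x i) = (\<Prod>i\<in>S \<inter> T. x i * x i)"
    by (simp add: prod.distrib)
  also have "\<dots> = 1"
    using S x cube_coord_square by (intro prod.neutral) blast
  finally have square: "(\<Prod>i\<in>S \<inter> T. x i) * (\<Prod>i\<in>S \<inter> T. x i) = 1" .
  have "(\<Prod>i\<in>(S - T) \<union> (T - S). x i) = (\<Prod>i\<in>S - T. x i) * (\<Prod>i\<in>T - S. x i)"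
    using fin by (intro prod.union_disjoint) auto
  then show ?thesis
    unfolding S_split T_split using square by (simp add: algebra_simps)
qed

lemma fourier_chi:
  assumes "S \<subseteq> {..<n}" and "T \<subseteq> {..<n}"
  shows "fourier n (chi n T) S = (if S = T then 1 else 0)"
proof -
  have "fourier n (chi n T) S = (\<Sum>x\<in>cube n. \<Prod>i\<in>(T - S) \<union> (S - T). x i) / 2 ^ n"
    unfolding fourier_def chi_def using monomial_mult_monomial assms by (simp cong: sum.cong)
  moreover have "S \<noteq> T \<Longrightarrow> (\<Sum>x\<in>cube n. \<Prod>i\<in>(T - S) \<union> (S - T). x i) = 0"
    using assms by (intro sum_cube_monomial) auto
  ultimately show ?thesis by (auto simp: card_cube)
qed

lemma fourier_add: "fourier n (\<lambda>x. f x + g x) S = fourier n f S + fourier n g S"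
  by (simp add: fourier_def sum.distrib distrib_right add_divide_distrib)

lemma fourier_scale: "fourier n (\<lambda>x. c * f x) S = c * fourier n f S"
  by (simp add: fourier_def sum_distrib_left mult.assoc)

lemma fourier_sum:
  "finite A \<Longrightarrow> fourier n (\<lambda>x. \<Sum>a\<in>A. F a x) S = (\<Sum>a\<in>A. fourier n (F a) S)"
  by (induction A rule: finite_induct) (auto simp: fourier_def sum.distrib distrib_right add_divide_distrib)

lemma prod_one_plus_mult_cube:
  assumes x: "x \<in> cube n" and y: "y \<in> cube n"
  shows "(\<Prod>i<n. 1 + x i * y i) = (if x = y then 2 ^ n else 0)"
proof (cases "x = y")
  case True
  then show ?thesis using cube_coord_square[OF x] by simp
next
  case False
  then obtain i where neq: "x i \<noteq> y i" by auto
  have i: "i < n"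
  proof (rule ccontr)
    assume "\<not> i < n"
    then show False using x y neq by (simp add: cube_def)
  qed
  moreover have "x i \<in> {-1, 1}" "y i \<in> {-1, 1}" using x y i by (auto simp: cube_def)
  ultimately have "x i * y i = -1" using neq by auto
  with i have "(\<Prod>i<n. 1 + x i * y i) = 0"
    by (intro prod_zero bexI[of _ i]) auto
  with False show ?thesis by simp
qed

lemma fourier_expansion:
  assumes x: "x \<in> cube n"
  shows "f x = (\<Sum>S\<in>Pow {..<n}. fourier n f S * (\<Prod>i\<in>S. x i))"
proof -
  have "(\<Sum>S\<in>Pow {..<n}. fourier n f S * (\<Prod>i\<in>S. x i))
      = (\<Sum>S\<in>Pow {..<n}. \<Sum>y\<in>cube n. f y * (\<Prod>i\<in>S. y i) * (\<Prod>i\<in>S. x i) / 2 ^ n)"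
    by (simp add: fourier_def sum_divide_distrib sum_distrib_right)
  also have "\<dots> = (\<Sum>y\<in>cube n. f y / 2 ^ n * (\<Sum>S\<in>Pow {..<n}. \<Prod>i\<in>S. x i * y i))"
    by (subst sum.swap) (simp add: sum_distrib_left prod.distrib algebra_simps)
  also have "\<dots> = (\<Sum>y\<in>cube n. f y / 2 ^ n * (\<Prod>i<n. 1 + x i * y i))"
  proof -
    have "(\<Sum>S\<in>Pow {..<n}. \<Prod>i\<in>S. x i * y i) = (\<Prod>i<n. 1 + x i * y i)" for y
      using prod_add[of "{..<n}" "\<lambda>i. x i * y i" "\<lambda>_. 1"] by (simp add: add.commute)
    then show ?thesis by simp
  qed
  also have "\<dots> = (\<Sum>y\<in>cube n. if y = x then f x else 0)"
    by (rule sum.cong) (use x prod_one_plus_mult_cube in auto)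
  finally show ?thesis using x by simp
qed

lemma deg_le_iff:
  "deg n f \<le> k \<longleftrightarrow> (\<forall>S. S \<subseteq> {..<n} \<and> fourier n f S \<noteq> 0 \<longrightarrow> card S \<le> k)"
proof -
  have "{card S | S. S \<subseteq> {..<n} \<and> fourier n f S \<noteq> 0} \<subseteq> card ` Pow {..<n}"
    by auto
  then have "finite {card S | S. S \<subseteq> {..<n} \<and> fourier n f S \<noteq> 0}"
    by (rule finite_subset) simp
  then show ?thesis
    unfolding deg_def by (subst Max_le_iff) auto
qed

lemma card_le_deg: "S \<subseteq> {..<n} \<Longrightarrow> fourier n f S \<noteq> 0 \<Longrightarrow> card S \<le> deg n f"
  using deg_le_iff by blast

lemma deg_le_dim: "deg n f \<le> n"
  unfolding deg_le_iff by (auto intro: card_mono[of "{..<n}", simplified])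

lemma deg_chi:
  assumes "S \<subseteq> {..<n}"
  shows "deg n (chi n S) = card S"
proof (rule antisym)
  show "deg n (chi n S) \<le> card S"
    using assms by (auto simp: deg_le_iff fourier_chi split: if_splits)
  show "card S \<le> deg n (chi n S)"
    using assms by (intro card_le_deg) (simp_all add: fourier_chi)
qed

lemma chi_fspace: "chi n S \<in> fspace n"
  by (simp add: chi_def fspace_def)

section \<open>Compatible basis transforms preserve degrees\<close>

definition scale_fun :: "real \<Rightarrow> ((nat \<Rightarrow> real) \<Rightarrow> real) \<Rightarrow> (nat \<Rightarrow> real) \<Rightarrow> real" where
  "scale_fun c f = (\<lambda>x. c * f x)"

interpretation fun_vs: vector_space scale_fun
  by unfold_locales (auto simp: scale_fun_def algebra_simps)

lemma sum_fun_apply: "sum g A x = (\<Sum>a\<in>A. g a x)"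
  by (induction A rule: infinite_finite_induct) auto

lemma (in vector_space) span_subset_span_if_independent_card_ge:
  assumes A: "finite A" and B: "independent B" "B \<subseteq> span A" and card: "card A \<le> card B"
  shows "span A \<subseteq> span B"
proof -
  have "A \<subseteq> span B"
  proof
    fix a assume a: "a \<in> A"
    show "a \<in> span B"
    proof (rule ccontr)
      assume a_out: "a \<notin> span B"
      have "independent (insert a B)" by (rule independent_insertI[OF a_out B(1)])
      moreover have "insert a B \<subseteq> span A" using a B(2) span_base by blast
      ultimately have "finite (insert a B) \<and> card (insert a B) \<le> card A"
        by (rule independent_span_bound[OF A])
      moreover have "a \<notin> B" using a_out span_base by blast
      ultimately show False using card by auto
    qed
  qed
  then show ?thesis using span_mono span_span by blast
qed

definition low_degree :: "nat \<Rightarrow> nat \<Rightarrow> ((nat \<Rightarrow> real) \<Rightarrow> real) set" where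
  "low_degree n k = {f \<in> fspace n. deg n f \<le> k}"

definition low_chars :: "nat \<Rightarrow> nat \<Rightarrow> ((nat \<Rightarrow> real) \<Rightarrow> real) set" where
  "low_chars n k = chi n ` {S. S \<subseteq> {..<n} \<and> card S \<le> k}"

lemma finite_low_chars: "finite (low_chars n k)"
  unfolding low_chars_def by (rule finite_imageI, rule finite_subset[of _ "Pow {..<n}"]) auto

lemma low_chars_subset: "low_chars n k \<subseteq> low_degree n k"
  by (auto simp: low_chars_def low_degree_def chi_fspace deg_chi)

lemma subspace_low_degree: "fun_vs.subspace (low_degree n k)"
proof (rule fun_vs.subspaceI)
  show "0 \<in> low_degree n k"
    by (simp add: low_degree_def fspace_def deg_le_iff fourier_def)
  show "f + g \<in> low_degree n k" if "f \<in> low_degree n k" "g \<in> low_degree n k" for f g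
    using that by (auto simp: low_degree_def fspace_def deg_le_iff plus_fun_def fourier_add)
  show "scale_fun c f \<in> low_degree n k" if "f \<in> low_degree n k" for c f
    using that by (auto simp: low_degree_def fspace_def deg_le_iff scale_fun_def fourier_scale)
qed

lemma low_degree_subset_span: "low_degree n k \<subseteq> fun_vs.span (low_chars n k)"
proof
  fix f assume f: "f \<in> low_degree n k"
  let ?I = "{S. S \<subseteq> {..<n} \<and> card S \<le> k}"
  have "f = (\<Sum>S\<in>?I. scale_fun (fourier n f S) (chi n S))"
  proof
    fix x
    show "f x = (\<Sum>S\<in>?I. scale_fun (fourier n f S) (chi n S)) x"
    proof (cases "x \<in> cube n")
      case True
      have "f x = (\<Sum>S\<in>Pow {..<n}. fourier n f S * (\<Prod>i\<in>S. x i))"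
        by (rule fourier_expansion[OF True])
      also have "\<dots> = (\<Sum>S\<in>?I. fourier n f S * (\<Prod>i\<in>S. x i))"
        using f by (intro sum.mono_neutral_right) (auto simp: low_degree_def deg_le_iff)
      finally show ?thesis
        using True by (simp add: sum_fun_apply scale_fun_def chi_def)
    next
      case False
      then show ?thesis
        using f by (simp add: sum_fun_apply scale_fun_def chi_def low_degree_def fspace_def)
    qed
  qed
  also have "\<dots> \<in> fun_vs.span (low_chars n k)"
    by (intro fun_vs.span_sum fun_vs.span_scale[unfolded scale_fun_def[symmetric]]
        fun_vs.span_base) (auto simp: low_chars_def)
  finally show "f \<in> fun_vs.span (low_chars n k)" .
qed

lemma span_low_chars: "fun_vs.span (low_chars n k) = low_degree n k"
  using fun_vs.span_minimal[OF low_chars_subset subspace_low_degree] low_degree_subset_span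
  by blast

lemma independent_low_chars: "fun_vs.independent (low_chars n k)"
proof -
  have "c v = 0" if sum0: "(\<Sum>w\<in>low_chars n k. scale_fun (c w) w) = 0" and v: "v \<in> low_chars n k"
    for c v
  proof -
    from v obtain S where v_eq: "v = chi n S" and S: "S \<in> {S. S \<subseteq> {..<n} \<and> card S \<le> k}"
      unfolding low_chars_def by (rule imageE)
    have coeff: "fourier n w S = (if w = v then 1 else 0)" if "w \<in> low_chars n k" for w
    proof -
      from that obtain T where w_eq: "w = chi n T" and T: "T \<in> {S. S \<subseteq> {..<n} \<and> card S \<le> k}"
        unfolding low_chars_def by (rule imageE)
      have "fourier n w S = (if S = T then 1 else 0)"
        unfolding w_eq using S T by (simp add: fourier_chi)
      moreover have "w = v \<longleftrightarrow> S = T"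
      proof
        assume "w = v"
        then have "fourier n w S = 1" using S by (simp add: v_eq fourier_chi)
        with \<open>fourier n w S = (if S = T then 1 else 0)\<close> show "S = T" by (simp split: if_splits)
      qed (simp add: w_eq v_eq)
      ultimately show ?thesis by simp
    qed
    have "0 = fourier n (\<lambda>x. (\<Sum>w\<in>low_chars n k. scale_fun (c w) w) x) S"
      by (simp add: sum0 fourier_def)
    also have "\<dots> = (\<Sum>w\<in>low_chars n k. c w * fourier n w S)"
      by (simp add: sum_fun_apply scale_fun_def fourier_sum fourier_scale finite_low_chars)
    also have "\<dots> = (\<Sum>w\<in>low_chars n k. if w = v then c v else 0)"
      by (rule sum.cong) (simp_all add: coeff)
    also have "\<dots> = c v"
      using v finite_low_chars by simp
    finally show "c v = 0" by simp
  qed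
  then show ?thesis using fun_vs.independent_if_scalars_zero[OF finite_low_chars] by metis
qed

text \<open>A basis transform is only linear on \<^term>\<open>fspace n\<close>; precomposing with the
  restriction to the cube turns it into a linear map on all functions.\<close>
definition transform_ext ::
    "nat \<Rightarrow> (((nat \<Rightarrow> real) \<Rightarrow> real) \<Rightarrow> ((nat \<Rightarrow> real) \<Rightarrow> real))
       \<Rightarrow> ((nat \<Rightarrow> real) \<Rightarrow> real) \<Rightarrow> ((nat \<Rightarrow> real) \<Rightarrow> real)" where
  "transform_ext n U f = U (\<lambda>x. if x \<in> cube n then f x else 0)"

lemma transform_ext_fspace: "f \<in> fspace n \<Longrightarrow> transform_ext n U f = U f"
proof -
  assume "f \<in> fspace n"
  then have "(\<lambda>x. if x \<in> cube n then f x else 0) = f" by (auto simp: fspace_def)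
  then show ?thesis by (simp add: transform_ext_def)
qed

lemma module_hom_transform_ext:
  assumes "basis_transform n U"
  shows "module_hom scale_fun scale_fun (transform_ext n U)"
proof -
  let ?r = "\<lambda>f x. if x \<in> cube n then f x else 0"
  have r: "?r f \<in> fspace n" for f by (simp add: fspace_def)
  have "?r (f + g) = (\<lambda>x. ?r f x + ?r g x)" "?r (scale_fun c f) = (\<lambda>x. c * ?r f x)" for f g c
    by (auto simp: scale_fun_def)
  then have "transform_ext n U (f + g) = transform_ext n U f + transform_ext n U g"
    and "transform_ext n U (scale_fun c f) = scale_fun c (transform_ext n U f)" for f g c
    using assms r unfolding basis_transform_def transform_ext_def by (simp_all add: plus_fun_def scale_fun_def)
  then show ?thesis
    unfolding module_hom_def module_hom_axioms_def
    using fun_vs.module_axioms by blast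
qed

lemma transform_image_low_degree:
  assumes bt: "basis_transform n U" and cp: "compatible n U"
  shows "U ` low_degree n k = low_degree n k"
proof -
  let ?L = "transform_ext n U" and ?E = "low_chars n k" and ?W = "low_degree n k"
  have hom: "module_hom scale_fun scale_fun ?L" by (rule module_hom_transform_ext[OF bt])
  have W_fspace: "?W \<subseteq> fspace n" by (auto simp: low_degree_def)
  have L_eq: "f \<in> ?W \<Longrightarrow> ?L f = U f" for f using W_fspace by (auto intro: transform_ext_fspace)
  have "inj_on U (fspace n)" using bt by (simp add: basis_transform_def bij_betw_def)
  then have inj: "inj_on ?L (fun_vs.span ?E)"
    unfolding span_low_chars using W_fspace L_eq by (auto simp: inj_on_def)
  have E_img: "?L ` ?E \<subseteq> ?W"
  proof
    fix g assume "g \<in> ?L ` ?E"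
    then obtain S where S: "S \<subseteq> {..<n}" "card S \<le> k" "g = U (chi n S)"
      by (auto simp: low_chars_def transform_ext_fspace chi_fspace)
    have "U (chi n S) \<in> fspace n"
      using bt chi_fspace by (auto simp: basis_transform_def bij_betw_def)
    then show "g \<in> ?W" using S cp by (simp add: low_degree_def compatible_def)
  qed
  have L_W: "?L ` ?W = fun_vs.span (?L ` ?E)"
    using module_hom.span_image[OF hom, of ?E] span_low_chars by simp
  have "fun_vs.span (?L ` ?E) \<subseteq> ?W"
    by (rule fun_vs.span_minimal[OF E_img subspace_low_degree])
  moreover have "?W \<subseteq> fun_vs.span (?L ` ?E)"
  proof -
    have "fun_vs.independent (?L ` ?E)"
      by (rule module_hom.independent_injective_image[OF hom independent_low_chars inj])
    moreover have "card (?L ` ?E) = card ?E"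
      using inj fun_vs.span_superset by (intro card_image) (rule inj_on_subset)
    ultimately show ?thesis
      using fun_vs.span_subset_span_if_independent_card_ge[OF finite_low_chars, of "?L ` ?E"]
        E_img span_low_chars by simp
  qed
  ultimately have "?L ` ?W = ?W" using L_W by blast
  then show ?thesis using L_eq by (simp cong: image_cong)
qed

lemma deg_inv_transform_chi:
  assumes bt: "basis_transform n U" and cp: "compatible n U" and S: "S \<subseteq> {..<n}"
  shows "deg n (inv_into (fspace n) U (chi n S)) = card S"
proof -
  let ?f = "inv_into (fspace n) U (chi n S)"
  have bij: "bij_betw U (fspace n) (fspace n)" using bt by (simp add: basis_transform_def)
  then have img: "chi n S \<in> U ` fspace n" using chi_fspace by (auto simp: bij_betw_def)
  then have f: "?f \<in> fspace n" "U ?f = chi n S"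
    by (simp_all add: inv_into_into f_inv_into_f)
  have "chi n S \<in> U ` low_degree n (card S)"
    unfolding transform_image_low_degree[OF bt cp] using S by (simp add: low_degree_def chi_fspace deg_chi)
  then obtain g where g: "chi n S = U g" "g \<in> low_degree n (card S)" by (rule imageE)
  then have "?f = g"
    using inv_into_f_eq[of U "fspace n" g "chi n S"] bij by (simp add: low_degree_def bij_betw_def)
  then have le: "deg n ?f \<le> card S" using g by (simp add: low_degree_def)
  have "?f \<in> low_degree n (deg n ?f)" using f by (simp add: low_degree_def)
  then have "chi n S \<in> low_degree n (deg n ?f)"
    using transform_image_low_degree[OF bt cp] f by (metis imageI)
  then have "card S \<le> deg n ?f" using S by (simp add: low_degree_def deg_chi)
  with le show ?thesis by simp
qed

lemma deg_U_compatible: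
  assumes "basis_transform n U" and "compatible n U"
  shows "deg_U n U f = deg n f"
proof -
  have "{deg n (inv_into (fspace n) U (chi n S)) | S. S \<subseteq> {..<n} \<and> fourier n f S \<noteq> 0}
      = {card S | S. S \<subseteq> {..<n} \<and> fourier n f S \<noteq> 0}"
    using deg_inv_transform_chi[OF assms] by metis
  then show ?thesis by (simp add: deg_U_def deg_def)
qed

section \<open>A strong law of large numbers for bounded variables\<close>

lemma indep_vars_PiM_components:
  assumes "prob_space N"
  shows "prob_space.indep_vars (PiM UNIV (\<lambda>_::'i. N)) (\<lambda>_. N) (\<lambda>i \<omega>. \<omega> i) UNIV"
proof -
  let ?M = "PiM UNIV (\<lambda>_::'i. N)"
  interpret P: prob_space ?M using assms by (intro prob_space_PiM)
  have "distr ?M N (\<lambda>\<omega>. \<omega> i) = N" for i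
    using assms by (intro distr_PiM_component) auto
  then show ?thesis
    by (subst P.indep_vars_iff_distr_eq_PiM) (simp_all add: restrict_UNIV)
qed

lemma prob_average_deviation_le:
  fixes N :: "'a measure" and Y :: "'a \<Rightarrow> real"
  assumes N: "prob_space N" and Y: "Y \<in> borel_measurable N"
    and bounded: "\<And>x. x \<in> space N \<Longrightarrow> Y x \<in> {a..b}" and "a < b" and "0 \<le> \<epsilon>" and "0 < n"
  shows "measure (PiM UNIV (\<lambda>_::nat. N))
           {\<omega> \<in> space (PiM UNIV (\<lambda>_::nat. N)). \<epsilon> \<le> \<bar>(\<Sum>i<n. Y (\<omega> i)) / real n - (\<integral>x. Y x \<partial>N)\<bar>}
         \<le> 2 * exp (- 2 * real n * \<epsilon>\<^sup>2 / (b - a)\<^sup>2)"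
proof -
  let ?M = "PiM UNIV (\<lambda>_::nat. N)"
  interpret P: prob_space ?M using N by (intro prob_space_PiM)
  have [measurable]: "Y \<in> borel_measurable N" by (rule Y)
  have comp: "(\<lambda>\<omega>. \<omega> i) \<in> measurable ?M N" for i
    by (rule measurable_component_singleton) simp
  have distr_comp: "distr ?M N (\<lambda>\<omega>. \<omega> i) = N" for i
    using N by (intro distr_PiM_component) auto
  have distr_Y: "distr ?M borel (\<lambda>\<omega>. Y (\<omega> i)) = distr N borel Y" for i
    using distr_distr[OF Y comp, of i] by (simp add: comp_def distr_comp)
  have mean: "P.expectation (\<lambda>\<omega>. Y (\<omega> 0)) = (\<integral>x. Y x \<partial>N)"
    using integral_distr[OF comp, of Y 0] by (simp add: distr_comp)
  interpret H: Hoeffding_ineq_iid ?M "{..<n}" "\<lambda>i \<omega>. Y (\<omega> i)" "\<lambda>\<omega>. Y (\<omega> 0)" a b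
    "P.expectation (\<lambda>\<omega>. Y (\<omega> 0))"
  proof unfold_locales
    show "P.indep_vars (\<lambda>_. borel) (\<lambda>i \<omega>. Y (\<omega> i)) {..<n}"
      using P.indep_vars_compose2[OF indep_vars_PiM_components[OF N], of "\<lambda>_. Y" "\<lambda>_. borel"] Y
      by (auto intro: P.indep_vars_subset)
    show "AE \<omega> in ?M. Y (\<omega> 0) \<in> {a..b}"
      using bounded by (intro AE_I2) (auto simp: space_PiM PiE_def)
  qed (use distr_Y comp Y in \<open>auto simp: measurable_comp\<close>)
  have "{..<n} \<noteq> {}" using \<open>0 < n\<close> by auto
  from H.Hoeffding_ineq_abs_ge'[OF \<open>0 \<le> \<epsilon>\<close> \<open>a < b\<close> this] show ?thesis
    unfolding mean by simp
qed

lemma AE_averages_tendsto_expectation: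
  fixes N :: "'a measure" and Y :: "'a \<Rightarrow> real"
  assumes N: "prob_space N" and Y: "Y \<in> borel_measurable N"
    and bounded: "\<And>x. x \<in> space N \<Longrightarrow> Y x \<in> {a..b}" and ab: "a < b"
  shows "AE \<omega> in PiM UNIV (\<lambda>_::nat. N). (\<lambda>n. (\<Sum>i<n. Y (\<omega> i)) / real n) \<longlonglongrightarrow> (\<integral>x. Y x \<partial>N)"
proof -
  let ?M = "PiM UNIV (\<lambda>_::nat. N)" and ?\<mu> = "\<integral>x. Y x \<partial>N"
  interpret P: prob_space ?M using N by (intro prob_space_PiM)
  have [measurable]: "Y \<in> borel_measurable N" by (rule Y)
  have close: "AE \<omega> in ?M. eventually (\<lambda>n. \<bar>(\<Sum>i<n. Y (\<omega> i)) / real n - ?\<mu>\<bar> < \<epsilon>) sequentially"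
    if "0 < \<epsilon>" for \<epsilon>
  proof -
    define A where "A n = {\<omega> \<in> space ?M. \<epsilon> \<le> \<bar>(\<Sum>i<n. Y (\<omega> i)) / real n - ?\<mu>\<bar>}" for n
    have A_sets [measurable]: "A n \<in> sets ?M" for n unfolding A_def by measurable
    define q where "q = exp (- 2 * \<epsilon>\<^sup>2 / (b - a)\<^sup>2)"
    have q: "0 < q" "q < 1" using \<open>0 < \<epsilon>\<close> ab by (auto simp: q_def)
    have bound: "measure ?M (A n) \<le> 2 * q ^ n" for n
    proof (cases "n = 0")
      case True
      then show ?thesis by (simp add: order.trans[OF P.prob_le_1])
    next
      case False
      have "exp (- 2 * real n * \<epsilon>\<^sup>2 / (b - a)\<^sup>2) = q ^ n"
        unfolding q_def by (subst exp_of_nat_mult[symmetric]) (simp add: field_simps)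
      then show ?thesis
        using prob_average_deviation_le[OF N Y bounded ab, of \<epsilon> n] \<open>0 < \<epsilon>\<close> False
        unfolding A_def by simp
    qed
    have "summable (\<lambda>n. 2 * q ^ n)" using q by (intro summable_mult summable_geometric) simp
    then have summ: "summable (\<lambda>n. measure ?M (A n))"
      by (rule summable_comparison_test') (simp add: bound)
    have "AE \<omega> in ?M. eventually (\<lambda>n. \<omega> \<in> space ?M - A n) sequentially"
      by (rule borel_cantelli_AE1[OF A_sets _ summ]) (simp add: P.emeasure_eq_measure)
    then show ?thesis
      by eventually_elim (auto simp: A_def elim!: eventually_mono)
  qed
  have "AE \<omega> in ?M. \<forall>j. eventually (\<lambda>n. \<bar>(\<Sum>i<n. Y (\<omega> i)) / real n - ?\<mu>\<bar> < inverse (real (Suc j))) sequentially"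
    unfolding AE_all_countable by (intro allI close) simp
  then show ?thesis
  proof eventually_elim
    case (elim \<omega>)
    show ?case
    proof (rule tendstoI)
      fix e :: real assume "0 < e"
      then obtain j where j: "inverse (real (Suc j)) < e" using reals_Archimedean by blast
      show "eventually (\<lambda>n. dist ((\<Sum>i<n. Y (\<omega> i)) / real n) ?\<mu> < e) sequentially"
        by (rule eventually_mono[OF elim[rule_format, of j]]) (use j in \<open>simp add: dist_real_def\<close>)
    qed
  qed
qed

section \<open>Boolean functions of degree at most one\<close>

lemma sum_mult_fun_upd:
  fixes b x :: "nat \<Rightarrow> real"
  assumes "finite A" and "j \<in> A"
  shows "(\<Sum>i\<in>A. b i * (x(j := y)) i) = (\<Sum>i\<in>A. b i * x i) + b j * (y - x j)"
proof -
  have "(\<Sum>i\<in>A - {j}. b i * (x(j := y)) i) = (\<Sum>i\<in>A - {j}. b i * x i)"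
    by (rule sum.cong) auto
  then show ?thesis
    using sum.remove[OF assms, of "\<lambda>i. b i * (x(j := y)) i"] sum.remove[OF assms, of "\<lambda>i. b i * x i"]
    by (simp add: algebra_simps)
qed

lemma deg_le_1_expansion:
  assumes deg: "deg d f \<le> 1" and x: "x \<in> cube d"
  shows "f x = fourier d f {} + (\<Sum>j<d. fourier d f {j} * x j)"
proof -
  let ?g = "\<lambda>S. fourier d f S * (\<Prod>i\<in>S. x i)"
  let ?Q = "insert {} ((\<lambda>j. {j}) ` {..<d})"
  have "f x = (\<Sum>S\<in>Pow {..<d}. ?g S)" by (rule fourier_expansion[OF x])
  also have "\<dots> = (\<Sum>S\<in>?Q. ?g S)"
  proof (rule sum.mono_neutral_right)
    show "\<forall>S\<in>Pow {..<d} - ?Q. ?g S = 0"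
    proof
      fix S assume S: "S \<in> Pow {..<d} - ?Q"
      then have "S \<noteq> {}" "\<not> (\<exists>j. S = {j})" by auto
      then have "\<not> card S \<le> 1"
        using S finite_subset[of S "{..<d}"] by (auto simp: le_Suc_eq card_1_singleton_iff)
      then show "?g S = 0" using deg S by (auto simp: deg_le_iff)
    qed
  qed auto
  also have "\<dots> = ?g {} + (\<Sum>j<d. ?g {j})"
    by (subst sum.insert) (auto simp: sum.reindex inj_on_def)
  finally show ?thesis by simp
qed

text \<open>Flipping a coordinate \<open>j\<close> changes a degree-1 function by \<open>2 b\<^sub>j x\<^sub>j\<close>; for a
  \<open>\<plusminus>1\<close>-valued one this forces \<open>f x = b\<^sub>j x\<^sub>j\<close> as soon as \<open>b\<^sub>j \<noteq> 0\<close>.\<close>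
lemma boolean_deg_le_1_dictator:
  assumes deg: "deg d f \<le> 1" and vals: "\<forall>x\<in>cube d. f x \<in> {-1, 1}"
    and x0: "x0 \<in> cube d" and y0: "y0 \<in> cube d" and nonconst: "f x0 \<noteq> f y0"
  shows "\<exists>j<d. \<exists>s\<in>{-1, 1}. \<forall>x\<in>cube d. f x = s * x j"
proof -
  define b where "b j = fourier d f {j}" for j
  have expansion: "f x = fourier d f {} + (\<Sum>i<d. b i * x i)" if "x \<in> cube d" for x
    using deg_le_1_expansion[OF deg that] by (simp add: b_def)
  have "\<exists>j<d. b j \<noteq> 0"
  proof (rule ccontr)
    assume "\<not> (\<exists>j<d. b j \<noteq> 0)"
    then have "(\<Sum>i<d. b i * x i) = 0" for x by (intro sum.neutral) auto
    then have "f x = fourier d f {}" if "x \<in> cube d" for x using expansion[OF that] by simp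
    then show False using x0 y0 nonconst by simp
  qed
  then obtain j where j: "j < d" "b j \<noteq> 0" by blast
  have f_eq: "f x = b j * x j" if x: "x \<in> cube d" for x
  proof -
    have flip: "x(j := - x j) \<in> cube d" by (rule cube_flip[OF x])
    have "f x - f (x(j := - x j)) = 2 * b j * x j"
      using expansion[OF x] expansion[OF flip] sum_mult_fun_upd[of "{..<d}" j b x "- x j"] j
      by simp
    moreover have "x j \<noteq> 0" using x j by (auto simp: cube_def)
    moreover have "f x \<in> {-1, 1}" "f (x(j := - x j)) \<in> {-1, 1}" using vals x flip by blast+
    ultimately show ?thesis using j(2) by (auto simp: mult.assoc)
  qed
  have "b j \<in> {-1, 1}"
  proof -
    obtain x where x: "x \<in> cube d" using cube_nonempty by blast
    then have "x j \<in> {-1, 1}" "b j * x j \<in> {-1, 1}" using vals f_eq j by (auto simp: cube_def)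
    then show ?thesis by auto
  qed
  with j f_eq show ?thesis by blast
qed

lemma signed_permutation_of_signed_coordinates:
  fixes \<sigma> :: "(nat \<Rightarrow> real) \<Rightarrow> nat \<Rightarrow> real"
  assumes coords: "\<forall>i<d. \<exists>j<d. \<exists>s\<in>{-1, 1::real}. \<forall>z\<in>cube d. \<sigma> z j = s * z i"
  shows "\<exists>\<pi> s. \<pi> permutes {..<d} \<and> (\<forall>j<d. s j \<in> {-1, 1::real}) \<and>
               (\<forall>j<d. \<forall>z\<in>cube d. \<sigma> z j = s j * z (\<pi> j))"
proof -
  obtain J sg where J: "\<And>i. i < d \<Longrightarrow> J i < d \<and> sg i \<in> {-1, 1::real} \<and> (\<forall>z\<in>cube d. \<sigma> z (J i) = sg i * z i)"
    using coords by metis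
  have "inj_on J {..<d}"
  proof (rule inj_onI)
    fix i i' assume i: "i \<in> {..<d}" and i': "i' \<in> {..<d}" and eq: "J i = J i'"
    show "i = i'"
    proof (rule ccontr)
      assume "i \<noteq> i'"
      obtain z where z: "z \<in> cube d" using cube_nonempty by blast
      have z': "z(i' := - z i') \<in> cube d" by (rule cube_flip[OF z])
      have Ji: "\<forall>z\<in>cube d. \<sigma> z (J i) = sg i * z i" and Ji': "\<forall>z\<in>cube d. \<sigma> z (J i') = sg i' * z i'"
        using J i i' by auto
      have "sg i * z i = sg i' * z i'"
        using Ji[rule_format, OF z] Ji'[rule_format, OF z] eq by simp
      moreover have "sg i * z i = sg i' * - z i'"
        using Ji[rule_format, OF z'] Ji'[rule_format, OF z'] eq \<open>i \<noteq> i'\<close> by simp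
      moreover have "z i' \<in> {-1, 1}" "sg i' \<in> {-1, 1}"
        using z J[of i'] i' unfolding cube_def by auto
      ultimately show False by auto
    qed
  qed
  define J' where "J' i = (if i < d then J i else i)" for i
  have "bij_betw J' {..<d} {..<d}"
    unfolding bij_betw_def
  proof
    show "inj_on J' {..<d}" using \<open>inj_on J {..<d}\<close> by (simp add: J'_def inj_on_def)
    then show "J' ` {..<d} = {..<d}" using J by (intro endo_inj_surj) (auto simp: J'_def)
  qed
  then have J'_perm: "J' permutes {..<d}" by (rule bij_imp_permutes) (simp add: J'_def)
  define \<pi> where "\<pi> = inv J'"
  have \<pi>: "\<pi> permutes {..<d}" unfolding \<pi>_def by (rule permutes_inv[OF J'_perm])
  have J'_\<pi>: "J' (\<pi> j) = j" for j unfolding \<pi>_def by (rule permutes_inverses(1)[OF J'_perm])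
  have \<pi>_lt: "j < d \<Longrightarrow> \<pi> j < d" for j using permutes_in_image[OF \<pi>] by simp
  show ?thesis
  proof (intro exI conjI)
    show "\<forall>j<d. sg (\<pi> j) \<in> {-1, 1}" using J \<pi>_lt by blast
    show "\<forall>j<d. \<forall>z\<in>cube d. \<sigma> z j = sg (\<pi> j) * z (\<pi> j)"
      using J \<pi>_lt J'_\<pi> by (metis J'_def)
  qed (rule \<pi>)
qed

section \<open>Relabelling tasks by a bijection of the cube\<close>

definition precomp :: "nat \<Rightarrow> ((nat \<Rightarrow> real) \<Rightarrow> (nat \<Rightarrow> real)) \<Rightarrow> ((nat \<Rightarrow> real) \<Rightarrow> real)
                         \<Rightarrow> ((nat \<Rightarrow> real) \<Rightarrow> real)" where
  "precomp d \<tau> h = (\<lambda>w. if w \<in> cube d then h (\<tau> w) else 0)"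

lemma deg_precomp_id_on_cube:
  assumes "\<forall>x\<in>cube d. \<tau> x = x"
  shows "deg d (precomp d \<tau> h) = deg d h"
proof -
  have "fourier d (precomp d \<tau> h) = fourier d h"
    unfolding fourier_def precomp_def using assms by (intro ext sum.cong) auto
  then show ?thesis by (simp add: deg_def)
qed

lemma chi_in_Fk: "S \<subseteq> {..<d} \<Longrightarrow> card S \<le> k \<Longrightarrow> chi d S \<in> Fk V d k \<longleftrightarrow> (\<forall>x\<in>cube d. (\<Prod>i\<in>S. x i) \<in> V)"
  by (simp add: Fk_def chi_fspace deg_chi chi_def)

lemma coordinates_of_Fk_1_preserving_bijection:
  assumes \<tau>: "bij_betw \<tau> (cube d) (cube d)" and sub: "precomp d \<tau> ` Fk V d 1 \<subseteq> Fk V d 1"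
    and V: "{-1, 1} \<subseteq> V" and i: "i < d"
  shows "\<exists>j<d. \<exists>s\<in>{-1, 1}. \<forall>w\<in>cube d. \<tau> w i = s * w j"
proof -
  let ?f = "precomp d \<tau> (chi d {i})"
  have img: "\<tau> ` cube d = cube d" using \<tau> by (simp add: bij_betw_def)
  have f: "?f w = \<tau> w i" if "w \<in> cube d" for w
    using that img by (auto simp: precomp_def chi_def)
  have "chi d {i} \<in> Fk V d 1" using i V by (subst chi_in_Fk) (auto simp: cube_def)
  then have deg: "deg d ?f \<le> 1" using sub by (auto simp: Fk_def)
  have vals: "\<forall>w\<in>cube d. ?f w \<in> {-1, 1}"
    using f img i by (auto simp: cube_def)
  obtain z where z: "z \<in> cube d" using cube_nonempty by blast
  obtain w w' where w: "w \<in> cube d" "\<tau> w = z" and w': "w' \<in> cube d" "\<tau> w' = z(i := - z i)"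
    using z cube_flip[OF z, of i] img by (metis imageE)
  have "?f w \<noteq> ?f w'" using f w w' z i by (auto simp: cube_def)
  from boolean_deg_le_1_dictator[OF deg vals w(1) w'(1) this] show ?thesis
    using f by auto
qed

lemma signed_permutation_of_Fk_1_preserving_bijection:
  assumes \<sigma>: "bij_betw \<sigma> (cube d) (cube d)"
    and sub: "precomp d (inv_into (cube d) \<sigma>) ` Fk V d 1 \<subseteq> Fk V d 1" and V: "{-1, 1} \<subseteq> V"
  shows "\<exists>\<pi> s. \<pi> permutes {..<d} \<and> (\<forall>j<d. s j \<in> {-1, 1::real}) \<and>
               (\<forall>j<d. \<forall>z\<in>cube d. \<sigma> z j = s j * z (\<pi> j))"
proof (rule signed_permutation_of_signed_coordinates, intro allI impI)
  fix i assume i: "i < d"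
  obtain j s where j: "j < d" "s \<in> {-1, 1}"
    and coord: "\<forall>w\<in>cube d. inv_into (cube d) \<sigma> w i = s * w j"
    using coordinates_of_Fk_1_preserving_bijection[OF bij_betw_inv_into[OF \<sigma>] sub V i] by blast
  have "\<sigma> z j = s * z i" if z: "z \<in> cube d" for z
  proof -
    have "\<sigma> z \<in> cube d" using \<sigma> z by (auto simp: bij_betw_def)
    then have "z i = s * \<sigma> z j"
      using coord inv_into_f_f[OF bij_betw_imp_inj_on[OF \<sigma>] z] by metis
    then show ?thesis using j(2) by auto
  qed
  with j show "\<exists>j<d. \<exists>s\<in>{-1, 1::real}. \<forall>z\<in>cube d. \<sigma> z j = s * z i" by blast
qed

lemma finite_Fk: "finite V \<Longrightarrow> finite (Fk V d k)"
proof -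
  assume "finite V"
  have "Fk V d k \<subseteq> (\<lambda>g x. if x \<in> cube d then g x else 0) ` PiE (cube d) (\<lambda>_. V)"
  proof
    fix h assume h: "h \<in> Fk V d k"
    then have "h = (\<lambda>x. if x \<in> cube d then restrict h (cube d) x else 0)"
      and "restrict h (cube d) \<in> PiE (cube d) (\<lambda>_. V)"
      by (auto simp: Fk_def fspace_def fun_eq_iff)
    then show "h \<in> (\<lambda>g x. if x \<in> cube d then g x else 0) ` PiE (cube d) (\<lambda>_. V)" by blast
  qed
  then show ?thesis
    by (rule finite_subset) (intro finite_imageI finite_PiE finite_cube \<open>finite V\<close>)
qed

lemma Fk_nonempty: "1 \<in> V \<Longrightarrow> Fk V d k \<noteq> {}"
  using chi_in_Fk[of "{}" d k V] by auto

lemma inj_on_precomp: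
  assumes "\<tau> ` cube d = cube d"
  shows "inj_on (precomp d \<tau>) (fspace d)"
proof (rule inj_onI)
  fix h h' assume h: "h \<in> fspace d" "h' \<in> fspace d" and eq: "precomp d \<tau> h = precomp d \<tau> h'"
  show "h = h'"
  proof
    fix x show "h x = h' x"
    proof (cases "x \<in> cube d")
      case True
      then obtain w where "w \<in> cube d" "x = \<tau> w" using assms by blast
      then show ?thesis using fun_cong[OF eq, of w] by (simp add: precomp_def)
    next
      case False
      then show ?thesis using h by (simp add: fspace_def)
    qed
  qed
qed

lemma sum_plus_card_diff_le:
  fixes D :: "'a \<Rightarrow> nat"
  assumes fin: "finite A" "finite B" and card: "card A = card B"
    and low: "\<forall>x\<in>A. D x \<le> k" and high: "\<forall>x\<in>B - A. k < D x"
  shows "sum D A + card (B - A) \<le> sum D B"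
proof -
  have A: "sum D A = sum D (A \<inter> B) + sum D (A - B)" using sum.Int_Diff[OF fin(1)] by blast
  have B: "sum D B = sum D (A \<inter> B) + sum D (B - A)"
    using sum.Int_Diff[OF fin(2), of D A] by (simp add: Int_commute)
  have "card (A - B) = card (B - A)"
    using card fin card_Diff_subset_Int[of A B] card_Diff_subset_Int[of B A] by (simp add: Int_commute)
  then have "sum D (A - B) \<le> card (B - A) * k"
    using low sum_bounded_above[of "A - B" D k] by simp
  moreover have "card (B - A) * Suc k \<le> sum D (B - A)"
    using high sum_bounded_below[of "B - A" "Suc k" D] by (simp add: Suc_le_eq)
  ultimately show ?thesis using A B by simp
qed

lemma sum_deg_precomp_ge:
  assumes \<tau>: "\<tau> ` cube d = cube d" and V: "finite V"
  shows "(\<Sum>h\<in>Fk V d k. deg d h) + card (precomp d \<tau> ` Fk V d k - Fk V d k)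
           \<le> (\<Sum>h\<in>Fk V d k. deg d (precomp d \<tau> h))"
proof -
  have inj: "inj_on (precomp d \<tau>) (Fk V d k)"
    using inj_on_precomp[OF \<tau>] by (rule inj_on_subset) (auto simp: Fk_def)
  have "(\<Sum>h\<in>Fk V d k. deg d h) + card (precomp d \<tau> ` Fk V d k - Fk V d k)
          \<le> sum (deg d) (precomp d \<tau> ` Fk V d k)"
  proof (rule sum_plus_card_diff_le)
    show "card (Fk V d k) = card (precomp d \<tau> ` Fk V d k)" using card_image[OF inj] by simp
    show "\<forall>h\<in>precomp d \<tau> ` Fk V d k - Fk V d k. k < deg d h"
    proof
      fix h assume "h \<in> precomp d \<tau> ` Fk V d k - Fk V d k"
      then obtain h0 where "h0 \<in> Fk V d k" "h = precomp d \<tau> h0" "h \<notin> Fk V d k" by blast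
      moreover have "\<tau> w \<in> cube d" if "w \<in> cube d" for w using \<tau> that by blast
      ultimately show "k < deg d h" by (auto simp: Fk_def precomp_def fspace_def)
    qed
  qed (use finite_Fk[OF V] in \<open>auto simp: Fk_def\<close>)
  then show ?thesis by (simp add: sum.reindex[OF inj])
qed

lemma set_pmf_subset_if_sum_pmf_eq_1:
  assumes "finite A" and "sum (pmf K) A = 1"
  shows "set_pmf K \<subseteq> A"
proof
  fix x assume x: "x \<in> set_pmf K"
  show "x \<in> A"
  proof (rule ccontr)
    assume "x \<notin> A"
    then have "measure_pmf.prob K (insert x A) = pmf K x + 1"
      using assms by (simp add: measure_measure_pmf_finite)
    moreover have "pmf K x > 0" using x by (simp add: pmf_positive)
    ultimately show False using measure_pmf.prob_le_1[of K "insert x A"] by simp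
  qed
qed

lemma expectation_task_pmf:
  assumes A: "finite A" "set_pmf K \<subseteq> A" and V: "finite V" "1 \<in> V"
  shows "measure_pmf.expectation (task_pmf V d K) Y
       = (\<Sum>k\<in>A. pmf K k * ((\<Sum>h\<in>Fk V d k. Y h) / real (card (Fk V d k))))"
  unfolding task_pmf_def
  using A finite_Fk[OF V(1)] Fk_nonempty[OF V(2)]
  by (subst pmf_expectation_bind[of A]) (auto simp: integral_pmf_of_set intro!: sum.cong)

text \<open>The difference of the expected degrees is a nonnegative combination of the per-level
  gains; so a level of positive probability gains nothing and therefore loses no function.\<close>
lemma precomp_Fk_subset_if_expected_deg_le:
  assumes A: "finite A" "set_pmf K \<subseteq> A" and k: "k \<in> set_pmf K"
    and V: "finite V" "1 \<in> V" and \<tau>: "\<tau> ` cube d = cube d"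
    and le: "measure_pmf.expectation (task_pmf V d K) (\<lambda>h. real (deg d (precomp d \<tau> h)))
               \<le> measure_pmf.expectation (task_pmf V d K) (\<lambda>h. real (deg d h))"
  shows "precomp d \<tau> ` Fk V d k \<subseteq> Fk V d k"
proof -
  define moved where "moved k = (\<Sum>h\<in>Fk V d k. real (deg d (precomp d \<tau> h)))" for k
  define orig where "orig k = (\<Sum>h\<in>Fk V d k. real (deg d h))" for k
  define N where "N k = real (card (Fk V d k))" for k
  define lost where "lost k = card (precomp d \<tau> ` Fk V d k - Fk V d k)" for k
  have gain: "real (lost k) \<le> moved k - orig k" for k
    using sum_deg_precomp_ge[OF \<tau> V(1), of k]
    unfolding moved_def orig_def lost_def by (simp flip: of_nat_sum of_nat_add)
  have N: "0 < N k" for k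
    using finite_Fk[OF V(1)] Fk_nonempty[OF V(2)] by (simp add: N_def card_gt_0_iff)
  have terms: "0 \<le> pmf K k * ((moved k - orig k) / N k)" for k
    using gain[of k] N[of k] by (intro mult_nonneg_nonneg divide_nonneg_pos) (auto intro: order.trans)
  have "(\<Sum>k\<in>A. pmf K k * ((moved k - orig k) / N k))
          = measure_pmf.expectation (task_pmf V d K) (\<lambda>h. real (deg d (precomp d \<tau> h)))
            - measure_pmf.expectation (task_pmf V d K) (\<lambda>h. real (deg d h))"
    unfolding expectation_task_pmf[OF A V] moved_def[symmetric] orig_def[symmetric] N_def[symmetric]
    by (simp add: sum_subtractf[symmetric] diff_divide_distrib right_diff_distrib)
  also have "\<dots> \<le> 0" using le by simp
  finally have "(\<Sum>k\<in>A. pmf K k * ((moved k - orig k) / N k)) = 0"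
    using sum_nonneg[of A "\<lambda>k. pmf K k * ((moved k - orig k) / N k)"] terms by simp
  then have "pmf K k * ((moved k - orig k) / N k) = 0"
    using sum_nonneg_eq_0_iff[OF A(1), of "\<lambda>k. pmf K k * ((moved k - orig k) / N k)"] terms k A(2)
    by auto
  moreover have "0 < pmf K k" using k by (simp add: pmf_positive)
  ultimately have "moved k - orig k = 0" using N[of k] by simp
  then have "lost k = 0" using gain[of k] by linarith
  then show ?thesis using finite_Fk[OF V(1)] by (auto simp: lost_def)
qed

section \<open>The learning objective\<close>

definition decoder :: "nat \<Rightarrow> ((nat \<Rightarrow> real) \<Rightarrow> (nat \<Rightarrow> real)) \<Rightarrow> ((nat \<Rightarrow> real) \<Rightarrow> (nat \<Rightarrow> real))
                         \<Rightarrow> (nat \<Rightarrow> real) \<Rightarrow> (nat \<Rightarrow> real)" where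
  "decoder d \<psi> \<Phi> = restrict (inv_into (cube d) (\<Phi> \<circ> \<psi>)) (cube d)"

lemma decoder_PiE: "admissible d m \<psi> \<Phi> \<Longrightarrow> decoder d \<psi> \<Phi> \<in> cube d \<rightarrow>\<^sub>E cube d"
  using bij_betw_inv_into[of "\<Phi> \<circ> \<psi>" "cube d" "cube d"]
  by (auto simp: decoder_def admissible_def bij_betw_def)

lemma g_of_eq_precomp_decoder:
  assumes "admissible d m \<psi> \<Phi>"
  shows "g_of d \<psi> \<Phi> h = precomp d (decoder d \<psi> \<Phi>) h"
  unfolding g_of_def
proof (rule the_equality)
  let ?\<sigma> = "\<Phi> \<circ> \<psi>"
  have bij: "bij_betw ?\<sigma> (cube d) (cube d)" using assms by (simp add: admissible_def)
  have inv: "inv_into (cube d) ?\<sigma> (?\<sigma> z) = z" if "z \<in> cube d" for z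
    using inv_into_f_f[OF bij_betw_imp_inj_on[OF bij] that] .
  show "precomp d (decoder d \<psi> \<Phi>) h \<in> fspace d \<and>
        (\<forall>z\<in>cube d. precomp d (decoder d \<psi> \<Phi>) h (\<Phi> (\<psi> z)) = h z)"
    using bij inv by (auto simp: precomp_def decoder_def fspace_def bij_betw_def)
  fix g assume g: "g \<in> fspace d \<and> (\<forall>z\<in>cube d. g (\<Phi> (\<psi> z)) = h z)"
  show "g = precomp d (decoder d \<psi> \<Phi>) h"
  proof
    fix w show "g w = precomp d (decoder d \<psi> \<Phi>) h w"
    proof (cases "w \<in> cube d")
      case True
      then have img: "w \<in> ?\<sigma> ` cube d" using bij by (simp add: bij_betw_def)
      have "inv_into (cube d) ?\<sigma> w \<in> cube d" "?\<sigma> (inv_into (cube d) ?\<sigma> w) = w"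
        by (rule inv_into_into[OF img], rule f_inv_into_f[OF img])
      then show ?thesis using g True by (auto simp: precomp_def decoder_def)
    next
      case False
      then show ?thesis using g by (simp add: precomp_def fspace_def)
    qed
  qed
qed

lemma objective_tendsto:
  assumes adm: "admissible d m \<psi> \<Phi>" and Ud: "basis_transform d Ud" "compatible d Ud"
    and avg: "(\<lambda>n. (\<Sum>i<n. real (deg d (precomp d (decoder d \<psi> \<Phi>) (hs i)))) / real n) \<longlonglongrightarrow> l"
  shows "objective d m \<psi> Ud Um hs \<Phi> \<longlonglongrightarrow> l"
proof -
  let ?c = "\<Sum>j<d. real (deg_U m Um (coord m \<Phi> j))"
  have "objective d m \<psi> Ud Um hs \<Phi>
          = (\<lambda>n. (\<Sum>i<n. real (deg d (precomp d (decoder d \<psi> \<Phi>) (hs i)))) / real n + ?c / real n)"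
    by (intro ext) (simp add: objective_def deg_U_compatible[OF Ud] g_of_eq_precomp_decoder[OF adm]
        add_divide_distrib)
  moreover have "(\<lambda>n. (\<Sum>i<n. real (deg d (precomp d (decoder d \<psi> \<Phi>) (hs i)))) / real n + ?c / real n)
                   \<longlonglongrightarrow> l + 0"
    by (intro tendsto_add avg lim_const_over_n)
  ultimately show ?thesis by simp
qed

text \<open>The representation that inverts the embedding \<open>\<psi>\<close>; off \<open>\<psi> ` cube d\<close> its value is
  irrelevant as long as it lies in the cube.\<close>
definition world_model :: "nat \<Rightarrow> ((nat \<Rightarrow> real) \<Rightarrow> (nat \<Rightarrow> real)) \<Rightarrow> (nat \<Rightarrow> real) \<Rightarrow> (nat \<Rightarrow> real)" where
  "world_model d \<psi> x = (if x \<in> \<psi> ` cube d then inv_into (cube d) \<psi> x else (SOME z. z \<in> cube d))"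

lemma world_model_admissible:
  assumes "inj_on \<psi> (cube d)"
  shows "admissible d m \<psi> (world_model d \<psi>)"
    and "\<forall>z\<in>cube d. decoder d \<psi> (world_model d \<psi>) z = z"
proof -
  have id: "(world_model d \<psi> \<circ> \<psi>) z = z" if "z \<in> cube d" for z
    using that assms by (simp add: world_model_def)
  then have "bij_betw (world_model d \<psi> \<circ> \<psi>) (cube d) (cube d)"
    by (intro bij_betw_cong[THEN iffD2, OF _ bij_betw_id]) auto
  moreover have "world_model d \<psi> ` cube m \<subseteq> cube d"
    by (auto simp: world_model_def inv_into_into some_in_eq)
  ultimately show "admissible d m \<psi> (world_model d \<psi>)" by (simp add: admissible_def)
  show "\<forall>z\<in>cube d. decoder d \<psi> (world_model d \<psi>) z = z"
    using id inv_into_f_f[OF bij_betw_imp_inj_on[OF \<open>bij_betw _ _ _\<close>]] by (auto simp: decoder_def)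
qed

lemma min_expected_deg_signed_permutation:
  assumes A: "finite A" "set_pmf K \<subseteq> A" "1 \<in> set_pmf K" and V: "finite V" "{-1, 1} \<subseteq> V"
    and adm: "admissible d m \<psi> \<Phi>"
    and le: "measure_pmf.expectation (task_pmf V d K) (\<lambda>h. real (deg d (precomp d (decoder d \<psi> \<Phi>) h)))
               \<le> measure_pmf.expectation (task_pmf V d K) (\<lambda>h. real (deg d h))"
  shows "\<exists>\<pi> s. \<pi> permutes {..<d} \<and> (\<forall>j<d. s j \<in> {-1, 1::real}) \<and>
               (\<forall>j<d. \<forall>z\<in>cube d. \<Phi> (\<psi> z) j = s j * z (\<pi> j))"
proof -
  have \<sigma>: "bij_betw (\<Phi> \<circ> \<psi>) (cube d) (cube d)" using adm by (simp add: admissible_def)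
  have img: "decoder d \<psi> \<Phi> ` cube d = cube d"
    using decoder_PiE[OF adm] bij_betw_inv_into[OF \<sigma>] by (auto simp: decoder_def bij_betw_def)
  have "1 \<in> V" using V(2) by auto
  from A V(1) this img le have "precomp d (decoder d \<psi> \<Phi>) ` Fk V d 1 \<subseteq> Fk V d 1"
    by (rule precomp_Fk_subset_if_expected_deg_le)
  moreover have "precomp d (decoder d \<psi> \<Phi>) = precomp d (inv_into (cube d) (\<Phi> \<circ> \<psi>))"
    by (auto simp: precomp_def decoder_def fun_eq_iff)
  ultimately show ?thesis
    using signed_permutation_of_Fk_1_preserving_bijection[OF \<sigma> _ V(2)] by simp
qed

lemma limit_objective_minimizers:
  assumes A: "finite A" "set_pmf K \<subseteq> A" "1 \<in> set_pmf K" and V: "finite V" "{-1, 1} \<subseteq> V"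
    and \<psi>: "inj_on \<psi> (cube d)" and Ud: "basis_transform d Ud" "compatible d Ud"
    and averages: "\<forall>\<tau>\<in>cube d \<rightarrow>\<^sub>E cube d. (\<lambda>n. (\<Sum>i<n. real (deg d (precomp d \<tau> (hs i)))) / real n)
                     \<longlonglongrightarrow> measure_pmf.expectation (task_pmf V d K) (\<lambda>h. real (deg d (precomp d \<tau> h)))"
  shows "(\<forall>\<Phi>. admissible d m \<psi> \<Phi> \<longrightarrow> convergent (objective d m \<psi> Ud Um hs \<Phi>)) \<and>
         (\<forall>\<Phi>s. admissible d m \<psi> \<Phi>s \<and>
               (\<forall>\<Phi>. admissible d m \<psi> \<Phi> \<longrightarrow>
                      lim (objective d m \<psi> Ud Um hs \<Phi>s) \<le> lim (objective d m \<psi> Ud Um hs \<Phi>))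
            \<longrightarrow> (\<exists>\<pi> s. \<pi> permutes {..<d} \<and> (\<forall>j<d. s j \<in> {-1, 1::real}) \<and>
                      (\<forall>j<d. \<forall>z\<in>cube d. \<Phi>s (\<psi> z) j = s j * z (\<pi> j))))"
proof -
  define L where "L \<tau> = measure_pmf.expectation (task_pmf V d K) (\<lambda>h. real (deg d (precomp d \<tau> h)))"
    for \<tau>
  have tendsto: "objective d m \<psi> Ud Um hs \<Phi> \<longlonglongrightarrow> L (decoder d \<psi> \<Phi>)" if "admissible d m \<psi> \<Phi>" for \<Phi>
    using objective_tendsto[OF that Ud] averages decoder_PiE[OF that] unfolding L_def by blast
  show ?thesis
  proof (intro conjI allI impI)
    fix \<Phi> assume "admissible d m \<psi> \<Phi>"
    then show "convergent (objective d m \<psi> Ud Um hs \<Phi>)" using tendsto convergentI by blast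
  next
    fix \<Phi>s assume min: "admissible d m \<psi> \<Phi>s \<and> (\<forall>\<Phi>. admissible d m \<psi> \<Phi> \<longrightarrow>
                        lim (objective d m \<psi> Ud Um hs \<Phi>s) \<le> lim (objective d m \<psi> Ud Um hs \<Phi>))"
    have "L (decoder d \<psi> \<Phi>s) \<le> L (decoder d \<psi> (world_model d \<psi>))"
      using min world_model_admissible(1)[OF \<psi>] tendsto limI by metis
    also have "\<dots> = measure_pmf.expectation (task_pmf V d K) (\<lambda>h. real (deg d h))"
      using world_model_admissible(2)[OF \<psi>] by (simp add: L_def deg_precomp_id_on_cube)
    finally show "\<exists>\<pi> s. \<pi> permutes {..<d} \<and> (\<forall>j<d. s j \<in> {-1, 1::real}) \<and>
                    (\<forall>j<d. \<forall>z\<in>cube d. \<Phi>s (\<psi> z) j = s j * z (\<pi> j))"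
      using min_expected_deg_signed_permutation[OF A V] min unfolding L_def by blast
  qed
qed

theorem theorem6:
  fixes d m :: nat and \<psi> :: "(nat \<Rightarrow> real) \<Rightarrow> (nat \<Rightarrow> real)" and V :: "real set"
    and p :: "nat \<Rightarrow> real" and K :: "nat pmf"
    and Ud Um :: "((nat \<Rightarrow> real) \<Rightarrow> real) \<Rightarrow> ((nat \<Rightarrow> real) \<Rightarrow> real)"
  assumes "1 \<le> d" and "d \<le> m"
    and "\<psi> ` cube d \<subseteq> cube m" and "inj_on \<psi> (cube d)"
    and "finite V" and "{-1, 1} \<subseteq> V"
    and "\<forall>k\<in>{1..d}. 0 < p k \<and> p k < 1" and "(\<Sum>k=1..d. p k) = 1"
    and "\<forall>k\<in>{1..d}. pmf K k = p k"
    and "basis_transform d Ud" and "compatible d Ud"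
    and "basis_transform m Um" and "compatible m Um"
  shows "AE hs in PiM UNIV (\<lambda>_::nat. measure_pmf (task_pmf V d K)).
           (\<forall>\<Phi>. admissible d m \<psi> \<Phi> \<longrightarrow> convergent (objective d m \<psi> Ud Um hs \<Phi>)) \<and>
           (\<forall>\<Phi>s. admissible d m \<psi> \<Phi>s \<and>
                 (\<forall>\<Phi>. admissible d m \<psi> \<Phi> \<longrightarrow>
                        lim (objective d m \<psi> Ud Um hs \<Phi>s) \<le> lim (objective d m \<psi> Ud Um hs \<Phi>))
              \<longrightarrow> (\<exists>\<pi> s. \<pi> permutes {..<d} \<and> (\<forall>j<d. s j \<in> {-1, 1::real}) \<and>
                        (\<forall>j<d. \<forall>z\<in>cube d. \<Phi>s (\<psi> z) j = s j * z (\<pi> j))))"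
proof -
  have "sum (pmf K) {1..d} = sum p {1..d}" using assms(9) by (intro sum.cong) auto
  then have supp: "set_pmf K \<subseteq> {1..d}"
    using assms(8) by (intro set_pmf_subset_if_sum_pmf_eq_1) simp_all
  have "1 \<in> {1..d}" using assms(1) by simp
  then have "pmf K 1 = p 1" "0 < p 1" using assms(7,9) by blast+
  then have one: "1 \<in> set_pmf K" by (simp add: set_pmf_iff)
  have deg_bound: "real (deg d f) \<le> real d + 1" for f using deg_le_dim[of d f] by simp
  have "AE hs in PiM UNIV (\<lambda>_::nat. measure_pmf (task_pmf V d K)).
          \<forall>\<tau>\<in>cube d \<rightarrow>\<^sub>E cube d. (\<lambda>n. (\<Sum>i<n. real (deg d (precomp d \<tau> (hs i)))) / real n)
            \<longlonglongrightarrow> measure_pmf.expectation (task_pmf V d K) (\<lambda>h. real (deg d (precomp d \<tau> h)))"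
    by (intro AE_finite_allI AE_averages_tendsto_expectation[where a = 0 and b = "real d + 1"])
      (auto intro: finite_PiE deg_bound simp: prob_space_measure_pmf)
  then show ?thesis
    by (rule eventually_mono)
      (rule limit_objective_minimizers[OF finite_atLeastAtMost supp one assms(5,6,4,10,11)])
qed

end
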